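(* Consider the constrained multivariate linear model described in the context, with $\mathcal{B}=\mathrm{span}(\boldsymbol\beta)$, $\mathcal{U}=\mathrm{span}(\mathbf U)$ and $\mathcal{E}_{\boldsymbol\Sigma}(\mathcal{B})$ the $\boldsymbol\Sigma$-envelope of $\mathcal{B}$. If $\mathcal{B}\subseteq\mathcal{U}\subseteq\mathcal{E}_{\boldsymbol\Sigma}(\mathcal{B})$, then $$\mathrm{avar}(\sqrt{n}\,\mathrm{vec}(\widehat{\boldsymbol\beta}_{\mathrm{cm}}))\le \mathrm{avar}(\sqrt{n}\,\mathrm{vec}(\widehat{\boldsymbol\beta}_{\mathrm{em}}))$$ in the Loewner (positive semi-definite) order, where these asymptotic covariance matrices are $$\mathrm{avar}(\sqrt{n}\,\mathrm{vec}(\widehat{\boldsymbol\beta}_{\mathrm{cm}}))=\boldsymbol\Sigma_{\mathbf X}^{-1}\otimes \mathbf U(\mathbf U^T\boldsymbol\Sigma^{-1}\mathbf U)^{-1}\mathbf U^T,$$ $$\mathrm{avar}(\sqrt{n}\,\mathrm{vec}(\widehat{\boldsymbol\beta}_{\mathrm{em}}))=\boldsymbol\Sigma_{\mathbf X}^{-1}\otimes\boldsymbol\Gamma\boldsymbol\Omega\boldsymbol\Gamma^T+(\boldsymbol\eta^T\otimes\boldsymbol\Gamma_0)\,\mathbf M^{\dagger}(\boldsymbol\Sigma_{\mathbf X})\,(\boldsymbol\eta\otimes\boldsymbol\Gamma_0^T).$$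
   Context: Data: for $i=1,\dots,n$, $\mathbf Y_i=\mathbf U\boldsymbol\alpha_0+\mathbf U\boldsymbol\alpha\mathbf X_i+\boldsymbol\varepsilon_i$, where $\mathbf Y_i\in\mathbb R^r$, the predictors $\mathbf X_i\in\mathbb R^p$ are non-stochastic, $\mathbf U\in\mathbb R^{r\times k}$ is a known matrix of full column rank, $\boldsymbol\alpha_0\in\mathbb R^k$, $\boldsymbol\alpha\in\mathbb R^{k\times p}$, and the $\boldsymbol\varepsilon_i$ are i.i.d. $N(0,\boldsymbol\Sigma)$ with $\boldsymbol\Sigma>0$. Set $\boldsymbol\beta=\mathbf U\boldsymbol\alpha\in\mathbb R^{r\times p}$, $\mathcal B=\mathrm{span}(\boldsymbol\beta)$, $\mathcal U=\mathrm{span}(\mathbf U)$, and let $\boldsymbol\Sigma_{\mathbf X}$ (positive definite) be the limit of the sample covariance matrix of the $\mathbf X_i$. A subspace $\mathcal R\subseteq\mathbb R^r$ reduces the symmetric matrix $\boldsymbol\Sigma$ if $\boldsymbol\Sigma\mathcal R\subseteq\mathcal R$ (equivalently $\boldsymbol\Sigma=\mathbf P_{\mathcal R}\boldsymbol\Sigma\mathbf P_{\mathcal R}+\mathbf Q_{\mathcal R}\boldsymbol\Sigma\mathbf Q_{\mathcal R}$, with $\mathbf P_{\mathcal R}$ the orthogonal projection onto $\mathcal R$ and $\mathbf Q_{\mathcal R}=\mathbf I-\mathbf P_{\mathcal R}$). The $\boldsymbol\Sigma$-envelope $\mathcal E_{\boldsymbol\Sigma}(\mathcal B)$ is the intersection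 of all reducing subspaces of $\boldsymbol\Sigma$ containing $\mathcal B$; let $u$ be its dimension, $\boldsymbol\Gamma\in\mathbb R^{r\times u}$ a semi-orthogonal basis of it, $(\boldsymbol\Gamma,\boldsymbol\Gamma_0)$ an orthogonal matrix, $\boldsymbol\eta=\boldsymbol\Gamma^T\boldsymbol\beta$ (so $\boldsymbol\beta=\boldsymbol\Gamma\boldsymbol\eta$), $\boldsymbol\Omega=\boldsymbol\Gamma^T\boldsymbol\Sigma\boldsymbol\Gamma$, $\boldsymbol\Omega_0=\boldsymbol\Gamma_0^T\boldsymbol\Sigma\boldsymbol\Gamma_0$. For $\mathbf C\in\mathbb R^{p\times p}$, $\mathbf M(\mathbf C)=\boldsymbol\eta\mathbf C\boldsymbol\eta^T\otimes\boldsymbol\Omega_0^{-1}+\boldsymbol\Omega\otimes\boldsymbol\Omega_0^{-1}+\boldsymbol\Omega^{-1}\otimes\boldsymbol\Omega_0-2\mathbf I$, and $\dagger$ denotes the Moore–Penrose inverse. $\widehat{\boldsymbol\beta}_{\mathrm{cm}}$ is the maximum likelihood estimator of $\boldsymbol\beta$ under the constrained model above (with $\mathbf U$ known), and $\widehat{\boldsymbol\beta}_{\mathrm{em}}$ is the maximum likelihood estimator of $\boldsymbol\beta$ under the unconstrained envelope model $\mathbf Y_i=\boldsymbol\beta_0+\boldsymbol\Gamma\boldsymbol\eta\mathbf X_i+\boldsymbol\varepsilon_i$, $\boldsymbol\Sigma=\boldsymbol\Gamma\boldsymbol\Omega\boldsymbol\Gamma^T+\boldsymbol\Gamma_0\boldsymbol\Omega_0\boldsymbol\Gamma_0^T$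 (with $\boldsymbol\Gamma$ unknown, $u$ known, and no use of $\mathbf U$); $\sqrt n\,\mathrm{vec}(\widehat{\boldsymbol\beta}-\boldsymbol\beta)$ is asymptotically normal with mean 0 and the displayed covariance matrices, denoted $\mathrm{avar}(\cdot)$. *)

theory Defs
  imports "Jordan_Normal_Form.Matrix"
begin

definition col_space :: "real mat \<Rightarrow> real vec set" where
  "col_space A = {A *\<^sub>v x | x. x \<in> carrier_vec (dim_col A)}"

definition is_subspace :: "nat \<Rightarrow> real vec set \<Rightarrow> bool" where
  "is_subspace r S \<longleftrightarrow> S \<subseteq> carrier_vec r \<and> 0\<^sub>v r \<in> S \<and>
     (\<forall>x\<in>S. \<forall>y\<in>S. x + y \<in> S) \<and> (\<forall>c. \<forall>x\<in>S. c \<cdot>\<^sub>v x \<in> S)"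

definition reduces :: "real mat \<Rightarrow> real vec set \<Rightarrow> bool" where
  "reduces S R \<longleftrightarrow> (\<forall>x\<in>R. S *\<^sub>v x \<in> R)"

definition envelope :: "real mat \<Rightarrow> real vec set \<Rightarrow> real vec set" where
  "envelope S B =
     \<Inter>{R. is_subspace (dim_row S) R \<and> reduces S R \<and> B \<subseteq> R}"

definition symmetric_mat :: "real mat \<Rightarrow> bool" where
  "symmetric_mat A \<longleftrightarrow> A\<^sup>T = A"

definition pos_def :: "nat \<Rightarrow> real mat \<Rightarrow> bool" where
  "pos_def n A \<longleftrightarrow> A \<in> carrier_mat n n \<and> symmetric_mat A \<and>
     (\<forall>x\<in>carrier_vec n. x \<noteq> 0\<^sub>v n \<longrightarrow> x \<bullet> (A *\<^sub>v x) > 0)"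

definition psd :: "nat \<Rightarrow> real mat \<Rightarrow> bool" where
  "psd n A \<longleftrightarrow> A \<in> carrier_mat n n \<and> symmetric_mat A \<and>
     (\<forall>x\<in>carrier_vec n. x \<bullet> (A *\<^sub>v x) \<ge> 0)"

definition loewner_le :: "nat \<Rightarrow> real mat \<Rightarrow> real mat \<Rightarrow> bool" where
  "loewner_le n A B \<longleftrightarrow> A \<in> carrier_mat n n \<and> B \<in> carrier_mat n n \<and> psd n (B - A)"

definition mat_inv :: "real mat \<Rightarrow> real mat" where
  "mat_inv A = (THE B. B \<in> carrier_mat (dim_row A) (dim_row A) \<and>
                       A * B = 1\<^sub>m (dim_row A) \<and> B * A = 1\<^sub>m (dim_row A))"

definition moore_penrose :: "real mat \<Rightarrow> real mat" where
  "moore_penrose A = (THE X. X \<in> carrier_mat (dim_col A) (dim_row A) \<and>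
      A * X * A = A \<and> X * A * X = X \<and> (A * X)\<^sup>T = A * X \<and> (X * A)\<^sup>T = X * A)"

(* Kronecker product A \<otimes> B: block matrix with (i,j) block A$$(i,j) \<cdot> B
   (compatible with column-stacking vec). *)
definition kron :: "real mat \<Rightarrow> real mat \<Rightarrow> real mat" where
  "kron A B = mat (dim_row A * dim_row B) (dim_col A * dim_col B)
     (\<lambda>(i, j). A $$ (i div dim_row B, j div dim_col B) * B $$ (i mod dim_row B, j mod dim_col B))"

definition full_col_rank :: "real mat \<Rightarrow> bool" where
  "full_col_rank A \<longleftrightarrow> (\<forall>x\<in>carrier_vec (dim_col A). A *\<^sub>v x = 0\<^sub>v (dim_row A) \<longrightarrow> x = 0\<^sub>v (dim_col A))"

definition M_mat :: "real mat \<Rightarrow> real mat \<Rightarrow> real mat \<Rightarrow> real mat \<Rightarrow> real mat" where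
  "M_mat eta Omega Omega0 C =
     kron (eta * C * eta\<^sup>T) (mat_inv Omega0) + kron Omega (mat_inv Omega0)
     + kron (mat_inv Omega) Omega0
     - 2 \<cdot>\<^sub>m 1\<^sub>m (dim_row Omega * dim_row Omega0)"

definition avar_cm :: "real mat \<Rightarrow> real mat \<Rightarrow> real mat \<Rightarrow> real mat" where
  "avar_cm SX S U =
     kron (mat_inv SX) (U * mat_inv (U\<^sup>T * mat_inv S * U) * U\<^sup>T)"

definition avar_em :: "real mat \<Rightarrow> real mat \<Rightarrow> real mat \<Rightarrow> real mat \<Rightarrow> real mat \<Rightarrow> real mat" where
  "avar_em SX S Gamma Gamma0 beta =
    (let eta = Gamma\<^sup>T * beta; Omega = Gamma\<^sup>T * S * Gamma;
         Omega0 = Gamma0\<^sup>T * S * Gamma0 in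
     kron (mat_inv SX) (Gamma * Omega * Gamma\<^sup>T)
     + kron (eta\<^sup>T) Gamma0 * moore_penrose (M_mat eta Omega Omega0 SX) * kron eta (Gamma0\<^sup>T))"

end

(*
  Let P = Gamma Gamma^T and Y = U (U^T Sigma^-1 U)^-1 U^T. Since span U lies in the envelope,
  P U = U, hence Gamma Omega Gamma^T - Y = P (Sigma - Y) P; and Y Sigma^-1 Y = Y gives
  Sigma - Y = (Sigma - Y) Sigma^-1 (Sigma - Y) >= 0. Tensoring with Sigma_X^-1 > 0 shows that the
  first summand of avar_em dominates avar_cm. The second summand is a congruence transform of
  M(Sigma_X)^dagger, and with K = Omega (x) Omega0^-1 we have
  M(Sigma_X) = eta Sigma_X eta^T (x) Omega0^-1 + (K - I) K^-1 (K - I) >= 0.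
  Positive semi-definiteness survives Kronecker products and Moore-Penrose inversion because
  every such matrix factors as W W^T with W of full column rank.
*)
theory Submission
  imports Defs "Jordan_Normal_Form.Determinant"
begin

lemma assoc_mult_mat_dims:
  fixes A B C :: "'a :: semiring_0 mat"
  assumes "dim_col A = dim_row B" "dim_col B = dim_row C"
  shows "A * B * C = A * (B * C)"
  by (rule assoc_mult_mat[of _ "dim_row A" "dim_col A" _ "dim_col B" _ "dim_col C"])
    (use assms in \<open>auto intro: carrier_matI\<close>)

lemma transpose_mult_dims:
  fixes A B :: "'a :: comm_semiring_0 mat"
  assumes "dim_col A = dim_row B"
  shows "(A * B)\<^sup>T = B\<^sup>T * A\<^sup>T"
  by (rule transpose_mult[of _ "dim_row A" "dim_col A" _ "dim_col B"])
    (use assms in \<open>auto intro: carrier_matI\<close>)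

lemma eq_matI_mult_vec:
  assumes A: "A \<in> carrier_mat n k" and B: "B \<in> carrier_mat n k"
    and eq: "\<And>x. x \<in> carrier_vec k \<Longrightarrow> A *\<^sub>v x = B *\<^sub>v x"
  shows "A = (B :: 'a :: semiring_1 mat)"
proof (rule eq_matI)
  fix i j assume "i < dim_row B" "j < dim_col B"
  then have i: "i < n" and j: "j < k" using B by auto
  have "A $$ (i, j) = (A *\<^sub>v unit_vec k j) $ i" using A i j by simp
  also have "\<dots> = B $$ (i, j)" using eq[of "unit_vec k j"] B i j by simp
  finally show "A $$ (i, j) = B $$ (i, j)" .
qed (use A B in auto)

lemma scalar_prod_self_nonneg: "0 \<le> (v :: real vec) \<bullet> v"
  unfolding scalar_prod_def by (intro sum_nonneg) auto

lemma scalar_prod_self_eq_0_iff: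
  assumes "(v :: real vec) \<in> carrier_vec n"
  shows "v \<bullet> v = 0 \<longleftrightarrow> v = 0\<^sub>v n"
proof
  assume "v \<bullet> v = 0"
  then have "\<forall>i\<in>{0..<n}. v $ i * v $ i = 0"
    using assms sum_nonneg_eq_0_iff[of "{0..<n}" "\<lambda>i. v $ i * v $ i"]
    unfolding scalar_prod_def by auto
  with assms show "v = 0\<^sub>v n" by (intro eq_vecI) auto
qed (use assms in simp)

lemma full_col_rank_semi_orthogonal:
  assumes T: "T \<in> carrier_mat m n" and TT: "T\<^sup>T * T = 1\<^sub>m n"
  shows "full_col_rank (T :: real mat)"
  unfolding full_col_rank_def
proof (intro ballI impI)
  fix z assume z: "z \<in> carrier_vec (dim_col T)" and Tz: "T *\<^sub>v z = 0\<^sub>v (dim_row T)"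
  have "z = (T\<^sup>T * T) *\<^sub>v z" using TT T z by simp
  also have "\<dots> = T\<^sup>T *\<^sub>v (T *\<^sub>v z)" using T z by auto
  finally show "z = 0\<^sub>v (dim_col T)" using T Tz by auto
qed

section \<open>Positive semi-definite matrices\<close>

lemma pos_def_imp_psd: "pos_def n A \<Longrightarrow> psd n A"
  unfolding pos_def_def psd_def
  by (metis less_eq_real_def mult_mat_vec_carrier scalar_prod_left_zero zero_carrier_vec)

lemma psd_add:
  assumes P: "psd n A" and Q: "psd n B"
  shows "psd n (A + B)"
proof -
  have A: "A \<in> carrier_mat n n" and B: "B \<in> carrier_mat n n" using P Q unfolding psd_def by auto
  have "x \<bullet> ((A + B) *\<^sub>v x) = x \<bullet> (A *\<^sub>v x) + x \<bullet> (B *\<^sub>v x)" if "x \<in> carrier_vec n" for x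
    using A B that by (simp add: add_mult_distrib_mat_vec scalar_prod_add_distrib[of _ n])
  with P Q A B show ?thesis
    unfolding psd_def symmetric_mat_def by (auto simp: transpose_add)
qed

lemma quadratic_form_congruence:
  assumes T: "(T :: real mat) \<in> carrier_mat m n" and A: "A \<in> carrier_mat m m"
    and x: "x \<in> carrier_vec n"
  shows "x \<bullet> ((T\<^sup>T * A * T) *\<^sub>v x) = (T *\<^sub>v x) \<bullet> (A *\<^sub>v (T *\<^sub>v x))"
proof -
  have "(T\<^sup>T * A * T) *\<^sub>v x = (T\<^sup>T * A) *\<^sub>v (T *\<^sub>v x)"
    using T A x by (intro assoc_mult_mat_vec) auto
  also have "\<dots> = T\<^sup>T *\<^sub>v (A *\<^sub>v (T *\<^sub>v x))"
    using T A x by (intro assoc_mult_mat_vec) auto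
  finally have "(T\<^sup>T * A * T) *\<^sub>v x = T\<^sup>T *\<^sub>v (A *\<^sub>v (T *\<^sub>v x))" .
  then show ?thesis
    using transpose_vec_mult_scalar[OF T x, of "A *\<^sub>v (T *\<^sub>v x)"] T A x
    by (simp add: comm_scalar_prod[of x n] comm_scalar_prod[of _ m "T *\<^sub>v x"])
qed

lemma psd_congruence:
  assumes P: "psd m A" and T: "T \<in> carrier_mat m n"
  shows "psd n (T\<^sup>T * A * T)"
proof -
  have A: "A \<in> carrier_mat m m" and sA: "A\<^sup>T = A"
    using P unfolding psd_def symmetric_mat_def by auto
  have "(T\<^sup>T * A * T)\<^sup>T = T\<^sup>T * A\<^sup>T * T"
    using T A by (simp add: transpose_mult_dims assoc_mult_mat_dims)
  with sA have "symmetric_mat (T\<^sup>T * A * T)" unfolding symmetric_mat_def by simp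
  moreover have "x \<bullet> ((T\<^sup>T * A * T) *\<^sub>v x) \<ge> 0" if "x \<in> carrier_vec n" for x
    using quadratic_form_congruence[OF T A that] P T that unfolding psd_def by auto
  ultimately show ?thesis using T A unfolding psd_def by auto
qed

lemma pos_def_congruence:
  assumes P: "pos_def m A" and T: "T \<in> carrier_mat m n" and rank: "full_col_rank T"
  shows "pos_def n (T\<^sup>T * A * T)"
proof -
  have A: "A \<in> carrier_mat m m" using P unfolding pos_def_def by auto
  have "x \<bullet> ((T\<^sup>T * A * T) *\<^sub>v x) > 0" if x: "x \<in> carrier_vec n" "x \<noteq> 0\<^sub>v n" for x
  proof -
    have "T *\<^sub>v x \<noteq> 0\<^sub>v m" using rank T x unfolding full_col_rank_def by auto
    then show ?thesis
      using P T x unfolding quadratic_form_congruence[OF T A x(1)] pos_def_def by auto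
  qed
  with psd_congruence[OF pos_def_imp_psd[OF P] T] show ?thesis
    unfolding psd_def pos_def_def by auto
qed

lemma psd_mult_transpose_self:
  assumes W: "(W :: real mat) \<in> carrier_mat n m"
  shows "psd n (W * W\<^sup>T)"
proof -
  have "psd m (1\<^sub>m m)" by (simp add: psd_def symmetric_mat_def scalar_prod_self_nonneg)
  from psd_congruence[OF this, of "W\<^sup>T" n] W show ?thesis by simp
qed

lemma psd_quadratic_form_shift:
  assumes P: "psd n A" and x: "x \<in> carrier_vec n" and i: "i < n"
  shows "0 \<le> x \<bullet> (A *\<^sub>v x) + 2 * s * (col A i \<bullet> x) + s\<^sup>2 * A $$ (i, i)"
proof -
  have A: "A \<in> carrier_mat n n" and sym: "A\<^sup>T = A"
    using P unfolding psd_def symmetric_mat_def by auto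
  let ?e = "unit_vec n i" and ?c = "col A i"
  have c: "?c \<in> carrier_vec n" using A by auto
  have Ae: "A *\<^sub>v ?e = ?c" using A i by (intro eq_vecI) auto
  have "?e \<bullet> (A *\<^sub>v x) = row A i \<bullet> x" using A i x by simp
  also have "row A i = ?c" using col_transpose[of i A] sym A i by simp
  finally have eAx: "?e \<bullet> (A *\<^sub>v x) = ?c \<bullet> x" .
  have "0 \<le> (x + s \<cdot>\<^sub>v ?e) \<bullet> (A *\<^sub>v (x + s \<cdot>\<^sub>v ?e))" using P x unfolding psd_def by simp
  also have "A *\<^sub>v (x + s \<cdot>\<^sub>v ?e) = A *\<^sub>v x + s \<cdot>\<^sub>v ?c"
    using A x by (simp add: mult_add_distrib_mat_vec[of A n n] mult_mat_vec Ae)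
  also have "(x + s \<cdot>\<^sub>v ?e) \<bullet> (A *\<^sub>v x + s \<cdot>\<^sub>v ?c)
      = x \<bullet> (A *\<^sub>v x) + s * (x \<bullet> ?c) + s * (?e \<bullet> (A *\<^sub>v x)) + s * s * (?e \<bullet> ?c)"
    using A x c by (simp add: add_scalar_prod_distrib[of _ n] scalar_prod_add_distrib[of _ n] algebra_simps)
  also have "\<dots> = x \<bullet> (A *\<^sub>v x) + 2 * s * (?c \<bullet> x) + s\<^sup>2 * A $$ (i, i)"
    using A x c i by (simp add: eAx comm_scalar_prod[of x n] power2_eq_square)
  finally show ?thesis .
qed

lemma psd_diag_nonneg:
  assumes "psd n A" "i < n"
  shows "0 \<le> A $$ (i, i)"
  using psd_quadratic_form_shift[OF assms(1) zero_carrier_vec assms(2), of 1] assms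
  unfolding psd_def by auto

lemma quadratic_nonneg_imp_linear_coeff_zero:
  fixes a b :: real
  assumes a: "0 \<le> a" and nonneg: "\<And>s. 0 \<le> 2 * s * b + s\<^sup>2 * a"
  shows "b = 0"
proof (rule ccontr)
  assume "b \<noteq> 0"
  define s where "s = - b / (a + 1)"
  have s: "(a + 1) * s = - b" using a unfolding s_def by simp
  have "(a + 1)\<^sup>2 * (2 * s * b + s\<^sup>2 * a) = 2 * ((a + 1) * s) * b * (a + 1) + ((a + 1) * s)\<^sup>2 * a"
    by (simp add: power2_eq_square algebra_simps)
  also have "\<dots> = - (b\<^sup>2 * (a + 2))" unfolding s by (simp add: power2_eq_square algebra_simps)
  also have "\<dots> < 0" using a \<open>b \<noteq> 0\<close> by simp
  finally show False using nonneg[of s] by (simp add: mult_less_0_iff)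
qed

lemma psd_diag_zero_imp_zero:
  assumes P: "psd n A" and i: "i < n" and j: "j < n" and zero: "A $$ (j, j) = 0"
  shows "A $$ (j, i) = 0"
proof (rule quadratic_nonneg_imp_linear_coeff_zero)
  show "0 \<le> A $$ (i, i)" using psd_diag_nonneg[OF P i] .
  have A: "A \<in> carrier_mat n n" using P unfolding psd_def by auto
  fix s
  show "0 \<le> 2 * s * A $$ (j, i) + s\<^sup>2 * A $$ (i, i)"
    using psd_quadratic_form_shift[OF P unit_vec_carrier i, of j s] A i j zero by simp
qed

definition schur_complement :: "real mat \<Rightarrow> nat \<Rightarrow> real mat" where
  "schur_complement A i = mat (dim_row A) (dim_col A)
     (\<lambda>(j, l). A $$ (j, l) - A $$ (j, i) * A $$ (l, i) / A $$ (i, i))"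

lemma psd_schur_complement:
  assumes P: "psd n A" and i: "i < n" and a: "0 < A $$ (i, i)"
  shows "psd n (schur_complement A i)"
proof -
  have A: "A \<in> carrier_mat n n" and sym: "A\<^sup>T = A"
    using P unfolding psd_def symmetric_mat_def by auto
  have symA: "A $$ (j, l) = A $$ (l, j)" if "j < n" "l < n" for j l
    using sym A that by (metis carrier_matD index_transpose_mat(1))
  let ?a = "A $$ (i, i)" and ?c = "col A i"
  let ?A' = "mat n n (\<lambda>(j, l). A $$ (j, l) - A $$ (j, i) * A $$ (l, i) / ?a)"
  have A': "schur_complement A i = ?A'" unfolding schur_complement_def using A by simp
  have c: "?c \<in> carrier_vec n" using A by auto
  have "symmetric_mat ?A'" unfolding symmetric_mat_def by (rule eq_matI) (auto simp: symA)
  moreover have "0 \<le> x \<bullet> (?A' *\<^sub>v x)" if x: "x \<in> carrier_vec n" for x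
  proof -
    define t where "t = ?c \<bullet> x"
    have "?A' *\<^sub>v x = A *\<^sub>v x - (t / ?a) \<cdot>\<^sub>v ?c"
    proof (rule eq_vecI)
      fix j assume "j < dim_vec (A *\<^sub>v x - (t / ?a) \<cdot>\<^sub>v ?c)"
      then have j: "j < n" using A by auto
      have "(?A' *\<^sub>v x) $ j = (\<Sum>l = 0..<n. (A $$ (j, l) - A $$ (j, i) * A $$ (l, i) / ?a) * x $ l)"
        using j x by (simp add: scalar_prod_def)
      also have "\<dots> = (\<Sum>l = 0..<n. A $$ (j, l) * x $ l) - A $$ (j, i) / ?a * (\<Sum>l = 0..<n. A $$ (l, i) * x $ l)"
        by (simp add: sum_subtractf sum_distrib_left algebra_simps)
      also have "\<dots> = (A *\<^sub>v x - (t / ?a) \<cdot>\<^sub>v ?c) $ j"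
        using j x A i unfolding t_def by (simp add: scalar_prod_def)
      finally show "(?A' *\<^sub>v x) $ j = (A *\<^sub>v x - (t / ?a) \<cdot>\<^sub>v ?c) $ j" .
    qed (use A in auto)
    then have "x \<bullet> (?A' *\<^sub>v x) = x \<bullet> (A *\<^sub>v x) - t * t / ?a"
      using x c A by (simp add: scalar_prod_minus_distrib[of _ n] comm_scalar_prod[of x n] t_def)
    also have "\<dots> = x \<bullet> (A *\<^sub>v x) + 2 * (- t / ?a) * t + (- t / ?a)\<^sup>2 * ?a"
      using a by (simp add: field_simps power2_eq_square)
    finally show ?thesis using psd_quadratic_form_shift[OF P x i, of "- t / ?a"] t_def by simp
  qed
  ultimately show ?thesis unfolding A' psd_def by auto
qed

lemma full_col_rank_add_column:
  assumes W: "W \<in> carrier_mat n m" "full_col_rank (W :: real mat)"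
    and i: "i < n" "v $ i \<noteq> 0" and row_i: "\<And>k. k < m \<Longrightarrow> W $$ (i, k) = 0"
  shows "full_col_rank (mat n (Suc m) (\<lambda>(j, k). if k = 0 then v $ j else W $$ (j, k - 1)))"
    (is "full_col_rank ?V")
  unfolding full_col_rank_def
proof (intro ballI impI)
  fix z assume z: "z \<in> carrier_vec (dim_col ?V)" and Vz: "?V *\<^sub>v z = 0\<^sub>v (dim_row ?V)"
  define z' where "z' = vec m (\<lambda>k. z $ Suc k)"
  have entry: "(?V *\<^sub>v z) $ j = v $ j * z $ 0 + (W *\<^sub>v z') $ j" if j: "j < n" for j
  proof -
    have "(?V *\<^sub>v z) $ j = (\<Sum>k = 0..<Suc m. ?V $$ (j, k) * z $ k)"
      using j z by (simp add: scalar_prod_def)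
    also have "\<dots> = v $ j * z $ 0 + (\<Sum>k = 0..<m. W $$ (j, k) * z $ Suc k)"
      by (subst sum.atLeast0_lessThan_Suc_shift) (use j in simp)
    also have "\<dots> = v $ j * z $ 0 + (W *\<^sub>v z') $ j"
      using j W unfolding z'_def by (simp add: scalar_prod_def)
    finally show ?thesis .
  qed
  have "(W *\<^sub>v z') $ i = 0" using i W row_i unfolding z'_def by (simp add: scalar_prod_def)
  then have z0: "z $ 0 = 0" using entry[OF i(1)] Vz i by simp
  have "W *\<^sub>v z' = 0\<^sub>v n" using entry Vz z0 W by (intro eq_vecI) auto
  then have "z' = 0\<^sub>v m" using W unfolding full_col_rank_def z'_def by auto
  then have "z $ Suc k = 0" if "k < m" for k
    using that unfolding z'_def by (metis index_vec index_zero_vec(1))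
  then show "z = 0\<^sub>v (dim_col ?V)"
    using z z0 by (intro eq_vecI) (auto simp: less_Suc_eq_0_disj)
qed

lemma gram_factorization_from_schur_complement:
  assumes P: "psd n A" and i: "i < n" and a: "0 < A $$ (i, i)"
    and W: "W \<in> carrier_mat n m" "full_col_rank W" and schur: "schur_complement A i = W * W\<^sup>T"
  shows "\<exists>V. V \<in> carrier_mat n (Suc m) \<and> full_col_rank V \<and> A = V * V\<^sup>T"
proof -
  have A: "A \<in> carrier_mat n n" using P unfolding psd_def by auto
  have WW: "(W * W\<^sup>T) $$ (j, l) = A $$ (j, l) - A $$ (j, i) * A $$ (l, i) / A $$ (i, i)"
    if "j < n" "l < n" for j l
    using that A unfolding schur[symmetric] schur_complement_def by simp
  have "row W i \<bullet> row W i = 0" using WW[OF i i] W i a by simp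
  then have "row W i = 0\<^sub>v m" using scalar_prod_self_eq_0_iff[of "row W i" m] W by auto
  then have row_i: "W $$ (i, k) = 0" if "k < m" for k
    using that W i by (metis index_row(1) index_zero_vec(1) carrier_matD)
  define v where "v = vec n (\<lambda>j. A $$ (j, i) / sqrt (A $$ (i, i)))"
  define V where "V = mat n (Suc m) (\<lambda>(j, k). if k = 0 then v $ j else W $$ (j, k - 1))"
  have V: "V \<in> carrier_mat n (Suc m)" unfolding V_def by simp
  have "v $ i \<noteq> 0" using i a unfolding v_def by simp
  with W i have "full_col_rank V"
    unfolding V_def by (intro full_col_rank_add_column[OF W i] row_i)
  moreover have "A = V * V\<^sup>T"
  proof (rule eq_matI)
    fix j l assume "j < dim_row (V * V\<^sup>T)" "l < dim_col (V * V\<^sup>T)"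
    then have j: "j < n" and l: "l < n" unfolding V_def by auto
    have "(V * V\<^sup>T) $$ (j, l) = (\<Sum>k = 0..<Suc m. V $$ (j, k) * V $$ (l, k))"
      using j l V by (simp add: scalar_prod_def)
    also have "\<dots> = v $ j * v $ l + (\<Sum>k = 0..<m. W $$ (j, k) * W $$ (l, k))"
      by (subst sum.atLeast0_lessThan_Suc_shift) (use j l in \<open>simp add: V_def\<close>)
    also have "(\<Sum>k = 0..<m. W $$ (j, k) * W $$ (l, k)) = (W * W\<^sup>T) $$ (j, l)"
      using j l W by (simp add: scalar_prod_def)
    also have "v $ j * v $ l = A $$ (j, i) * A $$ (l, i) / A $$ (i, i)"
      using j l a unfolding v_def by (simp add: field_simps flip: real_sqrt_mult)
    finally show "A $$ (j, l) = (V * V\<^sup>T) $$ (j, l)" using WW[OF j l] by simp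
  qed (use A in \<open>auto simp: V_def\<close>)
  ultimately show ?thesis using V by blast
qed

text \<open>Induction on the number of non-zero diagonal entries, which drops by at least one when
  passing to the Schur complement at a positive pivot.\<close>

lemma psd_gram_factorization:
  assumes "psd n A"
  shows "\<exists>m W. W \<in> carrier_mat n m \<and> full_col_rank W \<and> A = W * W\<^sup>T"
  using assms
proof (induction "card {j \<in> {0..<n}. A $$ (j, j) \<noteq> 0}" arbitrary: A rule: less_induct)
  case less
  note P = less.prems
  have A: "A \<in> carrier_mat n n" using P unfolding psd_def by auto
  show ?case
  proof (cases "\<exists>i<n. A $$ (i, i) \<noteq> 0")
    case False
    then have "A = 0\<^sub>m n 0 * (0\<^sub>m n 0)\<^sup>T"
      using psd_diag_zero_imp_zero[OF P] A by (intro eq_matI) (auto simp: scalar_prod_def)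
    moreover have "full_col_rank (0\<^sub>m n 0 :: real mat)"
      unfolding full_col_rank_def by auto
    ultimately show ?thesis by (intro exI[of _ 0] exI[of _ "0\<^sub>m n 0"]) simp
  next
    case True
    then obtain i where i: "i < n" and "A $$ (i, i) \<noteq> 0" by auto
    with psd_diag_nonneg[OF P i] have a: "0 < A $$ (i, i)" by auto
    let ?A' = "schur_complement A i"
    have "{j \<in> {0..<n}. ?A' $$ (j, j) \<noteq> 0} \<subseteq> {j \<in> {0..<n}. A $$ (j, j) \<noteq> 0} - {i}"
      using psd_diag_zero_imp_zero[OF P i] a A unfolding schur_complement_def by auto
    then have "card {j \<in> {0..<n}. ?A' $$ (j, j) \<noteq> 0} \<le> card ({j \<in> {0..<n}. A $$ (j, j) \<noteq> 0} - {i})"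
      by (intro card_mono) auto
    also have "\<dots> < card {j \<in> {0..<n}. A $$ (j, j) \<noteq> 0}"
      using i \<open>A $$ (i, i) \<noteq> 0\<close> by (intro card_Diff1_less) auto
    finally obtain m W where W: "W \<in> carrier_mat n m" "full_col_rank W" and "?A' = W * W\<^sup>T"
      using less.hyps psd_schur_complement[OF P i a] by blast
    then show ?thesis using gram_factorization_from_schur_complement[OF P i a] by blast
  qed
qed

lemma mat_inv_eqI:
  assumes A: "A \<in> carrier_mat n n" and B: "B \<in> carrier_mat n n"
    and AB: "A * B = 1\<^sub>m n" and BA: "B * A = 1\<^sub>m n"
  shows "mat_inv A = B"
  unfolding mat_inv_def
proof (rule the_equality)
  fix X assume "X \<in> carrier_mat (dim_row A) (dim_row A) \<and> A * X = 1\<^sub>m (dim_row A) \<and> X * A = 1\<^sub>m (dim_row A)"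
  then have X: "X \<in> carrier_mat n n" and XA: "X * A = 1\<^sub>m n" using A by auto
  have "X = X * (A * B)" using X AB by simp
  also have "\<dots> = (X * A) * B" using X A B by simp
  finally show "X = B" using XA B by simp
qed (use A B AB BA in auto)

lemma full_col_rank_mat_inv:
  assumes A: "A \<in> carrier_mat n n" and rank: "full_col_rank (A :: real mat)"
  shows "mat_inv A \<in> carrier_mat n n" "A * mat_inv A = 1\<^sub>m n" "mat_inv A * A = 1\<^sub>m n"
proof -
  have "det A \<noteq> 0" using det_0_iff_vec_prod_zero[OF A] rank A unfolding full_col_rank_def by auto
  from det_non_zero_imp_unit[OF A this, unfolded Units_def, of "()"]
  obtain B where B: "B \<in> carrier_mat n n" and BA: "B * A = 1\<^sub>m n" and AB: "A * B = 1\<^sub>m n"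
    by (auto simp: ring_mat_def)
  with mat_inv_eqI[OF A B AB BA]
  show "mat_inv A \<in> carrier_mat n n" "A * mat_inv A = 1\<^sub>m n" "mat_inv A * A = 1\<^sub>m n" by auto
qed

lemma pos_def_full_col_rank: "pos_def n A \<Longrightarrow> full_col_rank A"
  unfolding pos_def_def full_col_rank_def by force

lemma symmetric_mat_inv:
  assumes A: "A \<in> carrier_mat n n" "full_col_rank (A :: real mat)" and sym: "symmetric_mat A"
  shows "symmetric_mat (mat_inv A)"
proof -
  note inv = full_col_rank_mat_inv[OF A]
  have "A * (mat_inv A)\<^sup>T = (mat_inv A * A)\<^sup>T"
    using transpose_mult[OF inv(1) A(1)] sym unfolding symmetric_mat_def by simp
  moreover have "(mat_inv A)\<^sup>T * A = (A * mat_inv A)\<^sup>T"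
    using transpose_mult[OF A(1) inv(1)] sym unfolding symmetric_mat_def by simp
  ultimately have "mat_inv A = (mat_inv A)\<^sup>T" using inv A by (intro mat_inv_eqI) auto
  then show ?thesis unfolding symmetric_mat_def by simp
qed

lemma pos_def_mat_inv:
  assumes P: "pos_def n A"
  shows "pos_def n (mat_inv A)"
proof -
  have A: "A \<in> carrier_mat n n" and rank: "full_col_rank A"
    using P pos_def_full_col_rank unfolding pos_def_def by auto
  note inv = full_col_rank_mat_inv[OF A rank]
  have "0 < x \<bullet> (mat_inv A *\<^sub>v x)" if x: "x \<in> carrier_vec n" "x \<noteq> 0\<^sub>v n" for x
  proof -
    let ?y = "mat_inv A *\<^sub>v x"
    have y: "?y \<in> carrier_vec n" using inv x by auto
    have Ay: "A *\<^sub>v ?y = x" using A inv x by (simp flip: assoc_mult_mat_vec)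
    have "?y \<noteq> 0\<^sub>v n"
    proof
      assume "?y = 0\<^sub>v n"
      then have "x = A *\<^sub>v 0\<^sub>v n" using Ay by simp
      also have "\<dots> = 0\<^sub>v n" using A by (intro eq_vecI) auto
      finally show False using x(2) by simp
    qed
    then have "0 < ?y \<bullet> (A *\<^sub>v ?y)" using P y unfolding pos_def_def by auto
    also have "?y \<bullet> (A *\<^sub>v ?y) = x \<bullet> ?y"
      using Ay x y by (simp add: comm_scalar_prod[of _ n])
    finally show ?thesis .
  qed
  with inv symmetric_mat_inv[OF A rank] P show ?thesis unfolding pos_def_def by auto
qed

section \<open>Kronecker products\<close>

lemma kron_carrier [simp]:
  "kron A B \<in> carrier_mat (dim_row A * dim_row B) (dim_col A * dim_col B)"
  unfolding kron_def by auto

lemma kron_dims [simp]: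
  "dim_row (kron A B) = dim_row A * dim_row B" "dim_col (kron A B) = dim_col A * dim_col B"
  unfolding kron_def by auto

lemma less_mult_imp_mod_less: "(i :: nat) < a * b \<Longrightarrow> i mod b < b"
  by (metis mod_less_divisor mult_0_right neq0_conv not_less_zero)

lemma kron_index [simp]:
  "i < dim_row A * dim_row B \<Longrightarrow> j < dim_col A * dim_col B \<Longrightarrow>
   kron A B $$ (i, j) = A $$ (i div dim_row B, j div dim_col B) * B $$ (i mod dim_row B, j mod dim_col B)"
  unfolding kron_def by simp

lemma sum_mult_div_mod:
  fixes n1 n2 :: nat and f :: "nat \<Rightarrow> nat \<Rightarrow> 'a :: comm_monoid_add"
  shows "(\<Sum>t = 0..<n1 * n2. f (t div n2) (t mod n2)) = (\<Sum>s = 0..<n1. \<Sum>u = 0..<n2. f s u)"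
proof (induction n1)
  case (Suc n1)
  have "(\<Sum>t = 0..<Suc n1 * n2. f (t div n2) (t mod n2)) = (\<Sum>t = 0..<n1 * n2. f (t div n2) (t mod n2))
      + (\<Sum>t = n1 * n2..<n1 * n2 + n2. f (t div n2) (t mod n2))"
    by (subst sum.atLeastLessThan_concat) (auto simp: add.commute)
  also have "(\<Sum>t = n1 * n2..<n1 * n2 + n2. f (t div n2) (t mod n2))
      = (\<Sum>u = 0..<n2. f ((u + n1 * n2) div n2) ((u + n1 * n2) mod n2))"
    using sum.shift_bounds_nat_ivl[of "\<lambda>t. f (t div n2) (t mod n2)" 0 "n1 * n2" n2]
    by (simp add: add.commute)
  also have "\<dots> = (\<Sum>u = 0..<n2. f n1 u)" by (intro sum.cong) auto
  finally show ?case using Suc by simp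
qed simp

lemma kron_transpose: "(kron A B)\<^sup>T = kron A\<^sup>T B\<^sup>T"
proof (rule eq_matI)
  fix i j assume "i < dim_row (kron A\<^sup>T B\<^sup>T)" "j < dim_col (kron A\<^sup>T B\<^sup>T)"
  then have i: "i < dim_col A * dim_col B" and j: "j < dim_row A * dim_row B" by auto
  show "(kron A B)\<^sup>T $$ (i, j) = kron A\<^sup>T B\<^sup>T $$ (i, j)"
    using i j less_mult_imp_div_less[OF i] less_mult_imp_div_less[OF j]
      less_mult_imp_mod_less[OF i] less_mult_imp_mod_less[OF j]
    by simp
qed auto

lemma kron_mult:
  assumes A: "A \<in> carrier_mat ra n1" and C: "C \<in> carrier_mat n1 ca"
    and B: "B \<in> carrier_mat rb n2" and D: "D \<in> carrier_mat n2 cb"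
  shows "kron A B * kron C D = kron (A * C) (B * (D :: real mat))"
proof (rule eq_matI)
  fix i j assume "i < dim_row (kron (A * C) (B * D))" "j < dim_col (kron (A * C) (B * D))"
  then have i: "i < ra * rb" and j: "j < ca * cb" using A B C D by auto
  have i': "i div rb < ra" "i mod rb < rb"
    using i less_mult_imp_div_less less_mult_imp_mod_less by auto
  have j': "j div cb < ca" "j mod cb < cb"
    using j less_mult_imp_div_less less_mult_imp_mod_less by auto
  have "(kron A B * kron C D) $$ (i, j) = (\<Sum>t = 0..<n1 * n2. kron A B $$ (i, t) * kron C D $$ (t, j))"
    using i j A B C D by (simp add: scalar_prod_def)
  also have "\<dots> = (\<Sum>t = 0..<n1 * n2. (\<lambda>s u. (A $$ (i div rb, s) * C $$ (s, j div cb))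
      * (B $$ (i mod rb, u) * D $$ (u, j mod cb))) (t div n2) (t mod n2))"
    using i j A B C D less_mult_imp_div_less less_mult_imp_mod_less
    by (intro sum.cong) (auto simp: ac_simps)
  also have "\<dots> = (\<Sum>s = 0..<n1. \<Sum>u = 0..<n2. (A $$ (i div rb, s) * C $$ (s, j div cb))
      * (B $$ (i mod rb, u) * D $$ (u, j mod cb)))"
    by (rule sum_mult_div_mod)
  also have "\<dots> = (\<Sum>s = 0..<n1. A $$ (i div rb, s) * C $$ (s, j div cb))
      * (\<Sum>u = 0..<n2. B $$ (i mod rb, u) * D $$ (u, j mod cb))"
    by (simp add: sum_product)
  also have "\<dots> = kron (A * C) (B * D) $$ (i, j)"
    using i j i' j' A B C D by (simp add: scalar_prod_def)
  finally show "(kron A B * kron C D) $$ (i, j) = kron (A * C) (B * D) $$ (i, j)" .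
qed (use A B C D in auto)

lemma kron_one: "kron (1\<^sub>m a) (1\<^sub>m b) = (1\<^sub>m (a * b) :: real mat)"
proof (rule eq_matI)
  fix i j assume "i < dim_row (1\<^sub>m (a * b) :: real mat)" "j < dim_col (1\<^sub>m (a * b) :: real mat)"
  then have i: "i < a * b" and j: "j < a * b" by auto
  have "(i div b = j div b \<and> i mod b = j mod b) = (i = j)"
    by (metis div_mult_mod_eq)
  then show "kron (1\<^sub>m a) (1\<^sub>m b) $$ (i, j) = (1\<^sub>m (a * b) :: real mat) $$ (i, j)"
    using i j less_mult_imp_div_less[OF i] less_mult_imp_div_less[OF j]
      less_mult_imp_mod_less[OF i] less_mult_imp_mod_less[OF j]
    by auto
qed auto

lemma kron_minus_right:
  assumes B: "B \<in> carrier_mat rb cb" and C: "C \<in> carrier_mat rb cb"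
  shows "kron A (B - C) = kron A B - kron A C"
proof (rule eq_matI)
  fix i j assume "i < dim_row (kron A B - kron A C)" "j < dim_col (kron A B - kron A C)"
  then have i: "i < dim_row A * rb" and j: "j < dim_col A * cb" using B C by auto
  show "kron A (B - C) $$ (i, j) = (kron A B - kron A C) $$ (i, j)"
    using i j B C less_mult_imp_mod_less[OF i] less_mult_imp_mod_less[OF j]
    by (simp add: algebra_simps)
qed (use B C in auto)

lemma psd_kron:
  assumes "psd a A" "psd b B"
  shows "psd (a * b) (kron A B)"
proof -
  obtain m W where W: "W \<in> carrier_mat a m" and AW: "A = W * W\<^sup>T"
    using psd_gram_factorization[OF assms(1)] by blast
  obtain k V where V: "V \<in> carrier_mat b k" and BV: "B = V * V\<^sup>T"
    using psd_gram_factorization[OF assms(2)] by blast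
  have "kron A B = kron W V * (kron W V)\<^sup>T"
    unfolding AW BV kron_transpose using W V by (simp add: kron_mult[of _ a m _ a _ b k])
  moreover have "kron W V \<in> carrier_mat (a * b) (m * k)" using W V by auto
  ultimately show ?thesis using psd_mult_transpose_self by metis
qed

section \<open>The Moore-Penrose inverse of a positive semi-definite matrix\<close>

lemma penrose_conditions_unique:
  fixes A X Y :: "real mat"
  assumes A: "A \<in> carrier_mat n n" and X: "X \<in> carrier_mat n n" and Y: "Y \<in> carrier_mat n n"
    and X1: "A * X * A = A" and X2: "X * A * X = X" and X3: "(A * X)\<^sup>T = A * X" and X4: "(X * A)\<^sup>T = X * A"
    and Y1: "A * Y * A = A" and Y2: "Y * A * Y = Y" and Y3: "(A * Y)\<^sup>T = A * Y" and Y4: "(Y * A)\<^sup>T = Y * A"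
  shows "X = Y"
proof -
  have assoc: "P * Q * R = P * (Q * R)"
    if "P \<in> carrier_mat n n" "Q \<in> carrier_mat n n" "R \<in> carrier_mat n n" for P Q R :: "real mat"
    using that by simp
  have [simp]: "P * Q \<in> carrier_mat n n"
    if "P \<in> carrier_mat n n" "Q \<in> carrier_mat n n" for P Q :: "real mat"
    using that by simp
  note [simp] = A X Y
  have AX: "A * X = A * Y"
  proof -
    have "A * X = (A * Y * A) * X" using Y1 by simp
    also have "\<dots> = (A * Y)\<^sup>T * (A * X)\<^sup>T" using X3 Y3 by (simp add: assoc)
    also have "\<dots> = (A * X * (A * Y))\<^sup>T" using transpose_mult[of "A * X" n n "A * Y" n] by simp
    also have "A * X * (A * Y) = A * Y" using X1 by (simp flip: assoc)
    finally show ?thesis using Y3 by simp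
  qed
  have XA: "X * A = Y * A"
  proof -
    have "X * A = X * (A * Y * A)" using Y1 by simp
    also have "\<dots> = (X * A)\<^sup>T * (Y * A)\<^sup>T" using X4 Y4 by (simp add: assoc)
    also have "\<dots> = (Y * A * (X * A))\<^sup>T" using transpose_mult[of "Y * A" n n "X * A" n] by simp
    also have "Y * A * (X * A) = Y * A" using X1 by (simp add: assoc)
    finally show ?thesis using Y4 by simp
  qed
  have "X = X * A * X" using X2 by simp
  also have "\<dots> = Y * A * Y" using AX by (simp add: assoc flip: XA)
  finally show ?thesis using Y2 by simp
qed

lemma moore_penrose_eqI:
  assumes A: "A \<in> carrier_mat n n" and X: "X \<in> carrier_mat n n"
    and X1: "A * X * A = A" and X2: "X * A * X = X" and X3: "(A * X)\<^sup>T = A * X" and X4: "(X * A)\<^sup>T = X * A"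
  shows "moore_penrose A = X"
  unfolding moore_penrose_def
proof (rule the_equality)
  show "X \<in> carrier_mat (dim_col A) (dim_row A) \<and> A * X * A = A \<and> X * A * X = X
      \<and> (A * X)\<^sup>T = A * X \<and> (X * A)\<^sup>T = X * A"
    using assms by simp
  fix Y assume "Y \<in> carrier_mat (dim_col A) (dim_row A) \<and> A * Y * A = A \<and> Y * A * Y = Y
      \<and> (A * Y)\<^sup>T = A * Y \<and> (Y * A)\<^sup>T = Y * A"
  with A show "Y = X" by (elim conjE) (rule penrose_conditions_unique[OF A _ X _ _ _ _ X1 X2 X3 X4], auto)
qed

lemma pos_def_gram:
  assumes W: "W \<in> carrier_mat n m" and rank: "full_col_rank (W :: real mat)"
  shows "pos_def m (W\<^sup>T * W)"
proof -
  have "pos_def n (1\<^sub>m n)"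
    unfolding pos_def_def symmetric_mat_def
    using scalar_prod_self_nonneg scalar_prod_self_eq_0_iff by (auto simp: order_less_le)
  from pos_def_congruence[OF this W rank] show ?thesis using W by simp
qed

lemma moore_penrose_gram:
  assumes W: "W \<in> carrier_mat n m" and rank: "full_col_rank (W :: real mat)"
  defines "X \<equiv> W * mat_inv (W\<^sup>T * W)"
  shows "moore_penrose (W * W\<^sup>T) = X * X\<^sup>T"
proof -
  note G = pos_def_gram[OF W rank]
  define Gi where "Gi = mat_inv (W\<^sup>T * W)"
  have Gi: "Gi \<in> carrier_mat m m" and GGi: "W\<^sup>T * W * Gi = 1\<^sub>m m" and GiG: "Gi * (W\<^sup>T * W) = 1\<^sub>m m"
    using full_col_rank_mat_inv[OF _ pos_def_full_col_rank[OF G]] W unfolding Gi_def by auto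
  have Gi_sym: "Gi\<^sup>T = Gi"
    using pos_def_mat_inv[OF G] unfolding Gi_def pos_def_def symmetric_mat_def by auto
  have dims [simp]: "dim_row W = n" "dim_col W = m" "dim_row Gi = m" "dim_col Gi = m"
    using W Gi by auto
  have cancel_left: "W\<^sup>T * (W * (Gi * Z)) = Z" and cancel_right: "Gi * (W\<^sup>T * (W * Z)) = Z"
    if "dim_row Z = m" for Z
    using that GGi GiG by (simp_all flip: assoc_mult_mat_dims)
  have X: "X \<in> carrier_mat n m" unfolding X_def Gi_def[symmetric] using W Gi by simp
  have XX: "X * X\<^sup>T = W * (Gi * (Gi * W\<^sup>T))"
    unfolding X_def Gi_def[symmetric] by (simp add: transpose_mult_dims Gi_sym assoc_mult_mat_dims)
  have MX: "W * W\<^sup>T * (X * X\<^sup>T) = W * (Gi * W\<^sup>T)" and XM: "X * X\<^sup>T * (W * W\<^sup>T) = W * (Gi * W\<^sup>T)"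
    unfolding XX by (simp_all add: assoc_mult_mat_dims cancel_left cancel_right)
  have sym: "(W * (Gi * W\<^sup>T))\<^sup>T = W * (Gi * W\<^sup>T)"
    by (simp add: transpose_mult_dims Gi_sym assoc_mult_mat_dims)
  have MXM: "W * (Gi * W\<^sup>T) * (W * W\<^sup>T) = W * W\<^sup>T"
    by (simp add: assoc_mult_mat_dims cancel_right)
  have XMX: "W * (Gi * W\<^sup>T) * (X * X\<^sup>T) = X * X\<^sup>T"
    unfolding XX by (simp add: assoc_mult_mat_dims cancel_right)
  show ?thesis
  proof (rule moore_penrose_eqI)
    show "W * W\<^sup>T \<in> carrier_mat n n" "X * X\<^sup>T \<in> carrier_mat n n" using W X by auto
  qed (simp_all only: MX XM sym MXM XMX)
qed

lemma psd_moore_penrose: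
  assumes "psd n M"
  shows "psd n (moore_penrose M)"
proof -
  obtain m W where W: "W \<in> carrier_mat n m" "full_col_rank W" and M: "M = W * W\<^sup>T"
    using psd_gram_factorization[OF assms] by blast
  have "W * mat_inv (W\<^sup>T * W) \<in> carrier_mat n (dim_col (mat_inv (W\<^sup>T * W)))"
    using W by (auto intro: carrier_matI)
  then show ?thesis unfolding M moore_penrose_gram[OF W] by (rule psd_mult_transpose_self)
qed

section \<open>The two asymptotic covariances\<close>

definition constrained_cov :: "real mat \<Rightarrow> real mat \<Rightarrow> real mat" where
  "constrained_cov S U = U * mat_inv (U\<^sup>T * mat_inv S * U) * U\<^sup>T"

lemma
  assumes S: "pos_def r S" and U: "U \<in> carrier_mat r k" "full_col_rank U"
  shows constrained_cov_carrier: "constrained_cov S U \<in> carrier_mat r r"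
    and constrained_cov_symmetric: "(constrained_cov S U)\<^sup>T = constrained_cov S U"
    and constrained_cov_idem: "constrained_cov S U * mat_inv S * constrained_cov S U = constrained_cov S U"
proof -
  define Si where "Si = mat_inv S"
  have Si: "pos_def r Si" unfolding Si_def by (rule pos_def_mat_inv[OF S])
  define Wi where "Wi = mat_inv (U\<^sup>T * Si * U)"
  have W: "pos_def k (U\<^sup>T * Si * U)" by (rule pos_def_congruence[OF Si U])
  then have Wi: "pos_def k Wi" unfolding Wi_def by (rule pos_def_mat_inv)
  have dims [simp]: "dim_row U = r" "dim_col U = k" "dim_row Si = r" "dim_col Si = r"
    "dim_row Wi = k" "dim_col Wi = k"
    using U Si Wi unfolding pos_def_def by auto
  have "Wi * (U\<^sup>T * Si * U) = 1\<^sub>m k"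
    using full_col_rank_mat_inv[OF _ pos_def_full_col_rank[OF W]] W
    unfolding Wi_def pos_def_def by auto
  then have cancel: "Wi * (U\<^sup>T * (Si * (U * Z))) = Z" if "dim_row Z = k" for Z
    using that by (simp flip: assoc_mult_mat_dims)
  have C: "constrained_cov S U = U * (Wi * U\<^sup>T)"
    unfolding constrained_cov_def Si_def[symmetric] Wi_def[symmetric] by (simp add: assoc_mult_mat_dims)
  show "constrained_cov S U \<in> carrier_mat r r" unfolding C using U by auto
  show "(constrained_cov S U)\<^sup>T = constrained_cov S U"
    using Wi unfolding C pos_def_def symmetric_mat_def
    by (simp add: transpose_mult_dims assoc_mult_mat_dims)
  show "constrained_cov S U * mat_inv S * constrained_cov S U = constrained_cov S U"
    unfolding C Si_def[symmetric] by (simp add: assoc_mult_mat_dims cancel)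
qed

lemma psd_minus_constrained_cov:
  assumes S: "pos_def r S" and U: "U \<in> carrier_mat r k" "full_col_rank U"
  shows "psd r (S - constrained_cov S U)"
proof -
  let ?Y = "constrained_cov S U" and ?Si = "mat_inv S"
  have Sc: "S \<in> carrier_mat r r" and S_sym: "S\<^sup>T = S"
    using S unfolding pos_def_def symmetric_mat_def by auto
  have Y: "?Y \<in> carrier_mat r r" by (rule constrained_cov_carrier[OF S U])
  note inv = full_col_rank_mat_inv[OF Sc pos_def_full_col_rank[OF S]]
  have T: "(S - ?Y)\<^sup>T = S - ?Y"
    using transpose_minus[OF Sc Y] S_sym constrained_cov_symmetric[OF S U] by simp
  have YSiS: "?Y * ?Si * S = ?Y" using Y inv by (simp add: assoc_mult_mat[OF Y inv(1) Sc])
  have "(S - ?Y)\<^sup>T * ?Si * (S - ?Y) = (1\<^sub>m r - ?Y * ?Si) * (S - ?Y)"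
    unfolding T using minus_mult_distrib_mat[OF Sc Y inv(1)] inv by simp
  also have "\<dots> = (S - ?Y) - (?Y * ?Si * S - ?Y * ?Si * ?Y)"
  proof -
    have YSi: "?Y * ?Si \<in> carrier_mat r r" using Y inv by simp
    show ?thesis
      using minus_mult_distrib_mat[OF one_carrier_mat YSi minus_carrier_mat[OF Y]]
        mult_minus_distrib_mat[OF YSi Sc Y] Sc Y by simp
  qed
  also have "\<dots> = S - ?Y"
    unfolding YSiS constrained_cov_idem[OF S U] using Sc Y by (intro eq_matI) auto
  finally have "S - ?Y = (S - ?Y)\<^sup>T * ?Si * (S - ?Y)" by simp
  also have "psd r \<dots>"
    by (rule psd_congruence[OF pos_def_imp_psd[OF pos_def_mat_inv[OF S]] minus_carrier_mat[OF Y]])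
  finally show ?thesis .
qed

lemma projection_fixes_col_space:
  assumes G: "Gamma \<in> carrier_mat r u" "Gamma\<^sup>T * Gamma = 1\<^sub>m u"
    and U: "U \<in> carrier_mat r k" and sub: "col_space U \<subseteq> col_space Gamma"
  shows "Gamma * Gamma\<^sup>T * U = (U :: real mat)"
proof (rule eq_matI_mult_vec)
  show "Gamma * Gamma\<^sup>T * U \<in> carrier_mat r k" "U \<in> carrier_mat r k" using G U by auto
  fix x :: "real vec" assume x: "x \<in> carrier_vec k"
  then have "U *\<^sub>v x \<in> col_space Gamma" using sub U unfolding col_space_def by auto
  then obtain y where y: "y \<in> carrier_vec u" and Ux: "U *\<^sub>v x = Gamma *\<^sub>v y"
    using G unfolding col_space_def by auto
  have "(Gamma * Gamma\<^sup>T * U) *\<^sub>v x = (Gamma * Gamma\<^sup>T) *\<^sub>v (Gamma *\<^sub>v y)"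
    unfolding Ux[symmetric] using G U x by (intro assoc_mult_mat_vec) auto
  also have "\<dots> = Gamma *\<^sub>v (Gamma\<^sup>T *\<^sub>v (Gamma *\<^sub>v y))"
    by (rule assoc_mult_mat_vec) (use G y in auto)
  also have "Gamma\<^sup>T *\<^sub>v (Gamma *\<^sub>v y) = (Gamma\<^sup>T * Gamma) *\<^sub>v y"
    by (rule assoc_mult_mat_vec[symmetric]) (use G y in auto)
  also have "\<dots> = y" using G y by simp
  also have "Gamma *\<^sub>v y = U *\<^sub>v x" by (rule Ux[symmetric])
  finally show "(Gamma * Gamma\<^sup>T * U) *\<^sub>v x = U *\<^sub>v x" .
qed

lemma constrained_cov_le_projected_cov:
  assumes S: "pos_def r S" and U: "U \<in> carrier_mat r k" "full_col_rank U"
    and G: "Gamma \<in> carrier_mat r u" and fixes_U: "Gamma * Gamma\<^sup>T * U = U"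
  shows "loewner_le r (constrained_cov S U) (Gamma * (Gamma\<^sup>T * S * Gamma) * Gamma\<^sup>T)"
proof -
  let ?P = "Gamma * Gamma\<^sup>T" and ?Y = "constrained_cov S U"
  have Sc: "S \<in> carrier_mat r r" using S unfolding pos_def_def by auto
  have Y: "?Y \<in> carrier_mat r r" by (rule constrained_cov_carrier[OF S U])
  have P: "?P \<in> carrier_mat r r" using G by simp
  have P_sym: "?P\<^sup>T = ?P" using G by (simp add: transpose_mult_dims)
  have "pos_def k (U\<^sup>T * mat_inv S * U)" by (rule pos_def_congruence[OF pos_def_mat_inv[OF S] U])
  then have Mi: "mat_inv (U\<^sup>T * mat_inv S * U) \<in> carrier_mat k k"
    using full_col_rank_mat_inv(1)[OF _ pos_def_full_col_rank] unfolding pos_def_def by blast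
  have PY: "?P * ?Y = ?Y"
    using fixes_U P U Mi unfolding constrained_cov_def
    by (simp add: assoc_mult_mat[of _ r r _ k _ k, symmetric] assoc_mult_mat[of _ r r _ k _ r, symmetric])
  have YP: "?Y * ?P = ?Y"
  proof -
    have "?Y * ?P = (?P * ?Y)\<^sup>T"
      using transpose_mult[OF P Y] P_sym constrained_cov_symmetric[OF S U] by simp
    then show ?thesis using PY constrained_cov_symmetric[OF S U] by simp
  qed
  have "?P * (S - ?Y) = ?P * S - ?Y" using mult_minus_distrib_mat[OF P Sc Y] PY by simp
  then have "?P\<^sup>T * (S - ?Y) * ?P = ?P * S * ?P - ?Y"
    unfolding P_sym using minus_mult_distrib_mat[OF mult_carrier_mat[OF P Sc] Y P] YP by simp
  also have "?P * S * ?P = Gamma * (Gamma\<^sup>T * S * Gamma) * Gamma\<^sup>T"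
    using G Sc by (simp add: assoc_mult_mat_dims)
  finally have "psd r (Gamma * (Gamma\<^sup>T * S * Gamma) * Gamma\<^sup>T - ?Y)"
    using psd_congruence[OF psd_minus_constrained_cov[OF S U] P] by simp
  then show ?thesis using Y G Sc unfolding loewner_le_def by auto
qed

lemma psd_add_inverse_minus_two:
  assumes K: "K \<in> carrier_mat n n" "symmetric_mat K" and L: "psd n L"
    and KL: "K * L = 1\<^sub>m n" and LK: "L * K = 1\<^sub>m n"
  shows "psd n (K + L - 2 \<cdot>\<^sub>m 1\<^sub>m n)"
proof -
  have Lc: "L \<in> carrier_mat n n" using L unfolding psd_def by auto
  let ?N = "K - 1\<^sub>m n"
  have N: "?N \<in> carrier_mat n n" and N_sym: "?N\<^sup>T = ?N"
    using K transpose_minus[OF K(1) one_carrier_mat] unfolding symmetric_mat_def by auto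
  have "?N\<^sup>T * L * ?N = (1\<^sub>m n - L) * ?N"
    unfolding N_sym using minus_mult_distrib_mat[OF K(1) one_carrier_mat Lc] KL Lc by simp
  also have "\<dots> = (K - 1\<^sub>m n) - (L * K - L)"
    using minus_mult_distrib_mat[OF one_carrier_mat Lc N] mult_minus_distrib_mat[OF Lc K(1) one_carrier_mat]
      N Lc by simp
  also have "\<dots> = K + L - 2 \<cdot>\<^sub>m 1\<^sub>m n"
    unfolding LK using K Lc by (intro eq_matI) auto
  finally show ?thesis using psd_congruence[OF L N] by simp
qed

lemma psd_kron_add_inverse_minus_two:
  assumes Om: "pos_def a Om" and Om0: "pos_def b Om0"
  shows "psd (a * b) (kron Om (mat_inv Om0) + kron (mat_inv Om) Om0 - 2 \<cdot>\<^sub>m 1\<^sub>m (a * b))"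
proof (rule psd_add_inverse_minus_two)
  have Omc: "Om \<in> carrier_mat a a" and Om0c: "Om0 \<in> carrier_mat b b"
    using Om Om0 unfolding pos_def_def by auto
  note inv = full_col_rank_mat_inv[OF Omc pos_def_full_col_rank[OF Om]]
  note inv0 = full_col_rank_mat_inv[OF Om0c pos_def_full_col_rank[OF Om0]]
  show "kron Om (mat_inv Om0) \<in> carrier_mat (a * b) (a * b)" using Omc inv0 by auto
  show "kron Om (mat_inv Om0) * kron (mat_inv Om) Om0 = 1\<^sub>m (a * b)"
    "kron (mat_inv Om) Om0 * kron Om (mat_inv Om0) = 1\<^sub>m (a * b)"
    using kron_mult[OF Omc inv(1) inv0(1) Om0c] kron_mult[OF inv(1) Omc Om0c inv0(1)] inv inv0 kron_one
    by simp_all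
  show "symmetric_mat (kron Om (mat_inv Om0))"
    using Om pos_def_mat_inv[OF Om0] unfolding symmetric_mat_def pos_def_def
    by (simp add: kron_transpose)
  show "psd (a * b) (kron (mat_inv Om) Om0)"
    by (rule psd_kron[OF pos_def_imp_psd[OF pos_def_mat_inv[OF Om]] pos_def_imp_psd[OF Om0]])
qed

lemma psd_M_mat:
  assumes Om: "pos_def a Om" and Om0: "pos_def b Om0"
    and C: "psd p C" and eta: "eta \<in> carrier_mat a p"
  shows "psd (a * b) (M_mat eta Om Om0 C)"
proof -
  let ?E = "kron (eta * C * eta\<^sup>T) (mat_inv Om0)"
  let ?K = "kron Om (mat_inv Om0)" and ?L = "kron (mat_inv Om) Om0"
  have "psd a (eta\<^sup>T\<^sup>T * C * eta\<^sup>T)" by (rule psd_congruence[OF C]) (use eta in simp)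
  then have E: "psd (a * b) ?E"
    using psd_kron[OF _ pos_def_imp_psd[OF pos_def_mat_inv[OF Om0]]] by simp
  note KL = psd_kron_add_inverse_minus_two[OF Om Om0]
  have regroup: "A + K + L - D = A + (K + L - D)"
    if "A \<in> carrier_mat (a * b) (a * b)" "K \<in> carrier_mat (a * b) (a * b)"
      "L \<in> carrier_mat (a * b) (a * b)" "D \<in> carrier_mat (a * b) (a * b)"
    for A K L D :: "real mat"
    using that by (intro eq_matI) auto
  have dims: "dim_row Om = a" "dim_row Om0 = b" using Om Om0 unfolding pos_def_def by auto
  have "M_mat eta Om Om0 C = ?E + (?K + ?L - 2 \<cdot>\<^sub>m 1\<^sub>m (a * b))"
    unfolding M_mat_def dims
    using E Om Om0 pos_def_mat_inv[OF Om] pos_def_mat_inv[OF Om0]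
    by (intro regroup) (auto simp: psd_def pos_def_def)
  then show ?thesis using psd_add[OF E KL] by simp
qed

lemma loewner_le_kron_add:
  assumes P: "psd p P" and YZ: "loewner_le r Y Z" and Q: "psd (p * r) Q"
  shows "loewner_le (p * r) (kron P Y) (kron P Z + Q)"
proof -
  have Y: "Y \<in> carrier_mat r r" and Z: "Z \<in> carrier_mat r r" and ZY: "psd r (Z - Y)"
    using YZ unfolding loewner_le_def by auto
  have Pc: "P \<in> carrier_mat p p" and Qc: "Q \<in> carrier_mat (p * r) (p * r)"
    using P Q unfolding psd_def by auto
  have "kron P Z + Q - kron P Y = kron P (Z - Y) + Q"
    unfolding kron_minus_right[OF Z Y] using Pc Qc Y Z by (intro eq_matI) auto
  with psd_add[OF psd_kron[OF P ZY] Q] show ?thesis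
    using Pc Qc Y Z unfolding loewner_le_def by auto
qed

theorem proposition1:
  fixes r p k u :: nat
    and U :: "real mat"      (* r x k, known, full column rank *)
    and alpha :: "real mat"  (* k x p *)
    and S :: "real mat"  (* r x r error covariance *)
    and SX :: "real mat" (* p x p limit of sample covariance of X *)
    and Gamma :: "real mat"  (* r x u *)
    and Gamma0 :: "real mat" (* r x (r - u) *)
  assumes U: "U \<in> carrier_mat r k" "full_col_rank U"
    and alpha: "alpha \<in> carrier_mat k p"
    and S: "pos_def r S"
    and SX: "pos_def p SX"
    and Gamma: "Gamma \<in> carrier_mat r u" "Gamma\<^sup>T * Gamma = 1\<^sub>m u"
    and Gamma_basis: "col_space Gamma = envelope S (col_space (U * alpha))"
    and Gamma0: "Gamma0 \<in> carrier_mat r (r - u)" "Gamma0\<^sup>T * Gamma0 = 1\<^sub>m (r - u)"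
      "Gamma\<^sup>T * Gamma0 = 0\<^sub>m u (r - u)"
    and incl: "col_space (U * alpha) \<subseteq> col_space U"
      "col_space U \<subseteq> envelope S (col_space (U * alpha))"
  shows "loewner_le (p * r) (avar_cm SX S U)
           (avar_em SX S Gamma Gamma0 (U * alpha))"
proof -
  let ?eta = "Gamma\<^sup>T * (U * alpha)"
  let ?Omega = "Gamma\<^sup>T * S * Gamma"
  let ?Omega_perp = "Gamma0\<^sup>T * S * Gamma0"
  let ?B = "kron ?eta\<^sup>T Gamma0"
  have "Gamma * Gamma\<^sup>T * U = U"
    using projection_fixes_col_space[OF Gamma U(1)] incl(2) Gamma_basis by simp
  then have cov_le: "loewner_le r (constrained_cov S U) (Gamma * ?Omega * Gamma\<^sup>T)"
    by (rule constrained_cov_le_projected_cov[OF S U Gamma(1)])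
  have "pos_def u ?Omega" "pos_def (r - u) ?Omega_perp"
    using pos_def_congruence[OF S] full_col_rank_semi_orthogonal Gamma Gamma0 by auto
  then have M: "psd (u * (r - u)) (M_mat ?eta ?Omega ?Omega_perp SX)"
    using psd_M_mat pos_def_imp_psd[OF SX] U alpha Gamma by auto
  have "psd (p * r) (?B * moore_penrose (M_mat ?eta ?Omega ?Omega_perp SX) * ?B\<^sup>T)"
  proof -
    have "?B\<^sup>T \<in> carrier_mat (u * (r - u)) (p * r)" using U alpha Gamma Gamma0 by auto
    from psd_congruence[OF psd_moore_penrose[OF M] this] show ?thesis by simp
  qed
  moreover have "kron ?eta (Gamma0\<^sup>T) = ?B\<^sup>T" by (simp add: kron_transpose)
  ultimately show ?thesis
    unfolding avar_cm_def avar_em_def Let_def constrained_cov_def[symmetric]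
    using loewner_le_kron_add[OF pos_def_imp_psd[OF pos_def_mat_inv[OF SX]] cov_le] by simp
qed

end
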